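(* (Soundness) For every $\varphi\in\mathcal{L}_{AIL}$, if $\vdash\varphi$ in the system $\mathbf{AIL}$, then $\varphi$ is valid, i.e. $M,w\vDash_{AIL}\varphi$ for every epistemic model with awareness $M$ and every world $w$ of $M$.
   Context: Let $\mathcal{P}$ be a countable set of atoms and $\mathcal{G}$ a finite set of agents. An epistemic model with awareness is $M=\langle W,\{\sim_i,\mathscr{A}_i\}_{i\in\mathcal{G}},V\rangle$: $W\neq\emptyset$, $\sim_i$ an equivalence relation on $W$, $\mathscr{A}_i:W\to 2^{\mathcal{P}}$ with $\mathscr{A}_i(w)=\mathscr{A}_i(v)$ whenever $(w,v)\in\sim_i$, $V:\mathcal{P}\to 2^W$. $(w,v)\in\approx_i$ iff $\mathscr{A}_i(w)=\mathscr{A}_i(v)$ and $w,v$ agree on every $p\in\mathscr{A}_i(w)$. $\sim_i\circ\approx_i=\{(w,v):\exists t\,((w,t)\in\approx_i,(t,v)\in\sim_i)\}$; $R^+$ is the transitive closure. Language $\mathcal{L}_{AIL}$: $\varphi::=p\mid\neg\varphi\mid\varphi\wedge\varphi\mid A_i\varphi\mid I_i\varphi\mid E_i\varphi\mid[\approx]_i\varphi\mid[\circ^+]_i\varphi$. Semantics: $p$ true at $w$ iff $w\in V(p)$; Boolean as usual; $A_i\varphi$ iff $At(\varphi)\subseteq\mathscr{A}_i(w)$ ($At$ = atoms occurring); $I_i\varphi$, $[\approx]_i\varphi$, $[\circ^+]_i\varphi$ iff $\varphi$ holds at all successors of $w$ along $\sim_i$, $\approx_i$, $(\sim_i\circ\approx_i)^+$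 respectively; $E_i\varphi$ iff $A_i\varphi$ and $[\circ^+]_i\varphi$ hold. The Hilbert system $\mathbf{AIL}$ has axioms (for all formulas $\varphi,\psi$, atoms $p$, agents $i,j$): all propositional tautologies; $A_i\varphi\leftrightarrow A_i\neg\varphi$; $A_i(\varphi\wedge\psi)\leftrightarrow A_i\varphi\wedge A_i\psi$; $A_i\varphi\leftrightarrow A_iA_j\varphi$; $A_i\varphi\leftrightarrow A_iI_j\varphi$; $A_i\varphi\leftrightarrow A_i[\approx]_j\varphi$; $A_i\varphi\leftrightarrow A_i[\circ^+]_j\varphi$; $A_i\varphi\leftrightarrow A_iE_j\varphi$; $A_i\varphi\to I_iA_i\varphi$; $\neg A_i\varphi\to I_i\neg A_i\varphi$; $A_ip\wedge p\to[\approx]_ip$; for $\Box\in\{I_i,[\approx]_i\}$: $\Box(\varphi\to\psi)\to(\Box\varphi\to\Box\psi)$, $\Box\varphi\to\varphi$, $\neg\Box\varphi\to\Box\neg\Box\varphi$; $[\circ^+]_i(\varphi\to\psi)\to([\circ^+]_i\varphi\to[\circ^+]_i\psi)$; $[\circ^+]_i\varphi\to\varphi\wedge[\approx]_iI_i[\circ^+]_i\varphi$; $[\circ^+]_i(\varphi\to[\approx]_iI_i\varphi)\to(\varphi\to[\circ^+]_i\varphi)$; $E_i\varphi\leftrightarrow A_i\varphi\wedge[\circ^+]_i\varphi$. Rules: modus ponens, and necessitation for each of $I_i$, $[\approx]_i$, $[\circ^+]_i$ (from $\vdash\varphi$ infer $\vdash\Box\varphi$). $\vdash\varphi$ means $\varphi$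 is a theorem. *)

theory Defs
  imports Main "HOL-Library.Countable"
begin

datatype ('p, 'g) fm =
    Atom 'p
  | Neg "('p, 'g) fm"
  | Conj "('p, 'g) fm" "('p, 'g) fm"
  | Aw 'g "('p, 'g) fm"
  | Inf 'g "('p, 'g) fm"
  | Exp 'g "('p, 'g) fm"
  | Apx 'g "('p, 'g) fm"
  | Cir 'g "('p, 'g) fm"

primrec atoms :: "('p, 'g) fm \<Rightarrow> 'p set" where
  "atoms (Atom p) = {p}"
| "atoms (Neg a) = atoms a"
| "atoms (Conj a b) = atoms a \<union> atoms b"
| "atoms (Aw i a) = atoms a"
| "atoms (Inf i a) = atoms a"
| "atoms (Exp i a) = atoms a"
| "atoms (Apx i a) = atoms a"
| "atoms (Cir i a) = atoms a"

definition Impl :: "('p, 'g) fm \<Rightarrow> ('p, 'g) fm \<Rightarrow> ('p, 'g) fm" where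
  "Impl a b = Neg (Conj a (Neg b))"

definition Iff :: "('p, 'g) fm \<Rightarrow> ('p, 'g) fm \<Rightarrow> ('p, 'g) fm" where
  "Iff a b = Conj (Impl a b) (Impl b a)"

record ('w, 'p, 'g) model =
  W :: "'w set"
  R :: "'g \<Rightarrow> 'w rel"
  Aws :: "'g \<Rightarrow> 'w \<Rightarrow> 'p set"
  V :: "'p \<Rightarrow> 'w set"

definition is_model :: "('w, 'p, 'g) model \<Rightarrow> bool" where
  "is_model M \<longleftrightarrow> W M \<noteq> {}
     \<and> (\<forall>i. equiv (W M) (R M i))
     \<and> (\<forall>i w v. (w, v) \<in> R M i \<longrightarrow> Aws M i w = Aws M i v)
     \<and> (\<forall>p. V M p \<subseteq> W M)"

definition approx :: "('w, 'p, 'g) model \<Rightarrow> 'g \<Rightarrow> 'w rel" where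
  "approx M i = {(w, v). w \<in> W M \<and> v \<in> W M \<and> Aws M i w = Aws M i v
       \<and> (\<forall>p \<in> Aws M i w. (w \<in> V M p \<longleftrightarrow> v \<in> V M p))}"

text \<open>(\<sim>_i \<circ> \<approx>_i) = {(w,v). \<exists>t. (w,t) \<in> \<approx>_i \<and> (t,v) \<in> \<sim>_i}, i.e. relcomp approx R.\<close>
definition circ :: "('w, 'p, 'g) model \<Rightarrow> 'g \<Rightarrow> 'w rel" where
  "circ M i = approx M i O R M i"

primrec sat :: "('w, 'p, 'g) model \<Rightarrow> 'w \<Rightarrow> ('p, 'g) fm \<Rightarrow> bool" where
  "sat M w (Atom p) = (w \<in> V M p)"
| "sat M w (Neg a) = (\<not> sat M w a)"
| "sat M w (Conj a b) = (sat M w a \<and> sat M w b)"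
| "sat M w (Aw i a) = (atoms a \<subseteq> Aws M i w)"
| "sat M w (Inf i a) = (\<forall>v. (w, v) \<in> R M i \<longrightarrow> sat M v a)"
| "sat M w (Apx i a) = (\<forall>v. (w, v) \<in> approx M i \<longrightarrow> sat M v a)"
| "sat M w (Cir i a) = (\<forall>v. (w, v) \<in> (circ M i)\<^sup>+ \<longrightarrow> sat M v a)"
| "sat M w (Exp i a) = (atoms a \<subseteq> Aws M i w \<and> (\<forall>v. (w, v) \<in> (circ M i)\<^sup>+ \<longrightarrow> sat M v a))"

text \<open>A formula is (an instance of) a propositional tautology iff it is true under
  every Boolean valuation of its formulas that respects negation and conjunction
  (modal subformulas and atoms being treated as propositional variables).\<close>
definition taut :: "('p, 'g) fm \<Rightarrow> bool" where
  "taut a \<longleftrightarrow> (\<forall>h :: ('p, 'g) fm \<Rightarrow> bool.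
      (\<forall>x. h (Neg x) = (\<not> h x)) \<and> (\<forall>x y. h (Conj x y) = (h x \<and> h y)) \<longrightarrow> h a)"

inductive derivable :: "('p, 'g) fm \<Rightarrow> bool" where
  Taut: "taut a \<Longrightarrow> derivable a"
| AwNeg: "derivable (Iff (Aw i a) (Aw i (Neg a)))"
| AwConj: "derivable (Iff (Aw i (Conj a b)) (Conj (Aw i a) (Aw i b)))"
| AwAw: "derivable (Iff (Aw i a) (Aw i (Aw j a)))"
| AwInf: "derivable (Iff (Aw i a) (Aw i (Inf j a)))"
| AwApx: "derivable (Iff (Aw i a) (Aw i (Apx j a)))"
| AwCir: "derivable (Iff (Aw i a) (Aw i (Cir j a)))"
| AwExp: "derivable (Iff (Aw i a) (Aw i (Exp j a)))"
| AwIntro: "derivable (Impl (Aw i a) (Inf i (Aw i a)))"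
| NAwIntro: "derivable (Impl (Neg (Aw i a)) (Inf i (Neg (Aw i a))))"
| AwAtom: "derivable (Impl (Conj (Aw i (Atom p)) (Atom p)) (Apx i (Atom p)))"
| KInf: "derivable (Impl (Inf i (Impl a b)) (Impl (Inf i a) (Inf i b)))"
| TInf: "derivable (Impl (Inf i a) a)"
| FiveInf: "derivable (Impl (Neg (Inf i a)) (Inf i (Neg (Inf i a))))"
| KApx: "derivable (Impl (Apx i (Impl a b)) (Impl (Apx i a) (Apx i b)))"
| TApx: "derivable (Impl (Apx i a) a)"
| FiveApx: "derivable (Impl (Neg (Apx i a)) (Apx i (Neg (Apx i a))))"
| KCir: "derivable (Impl (Cir i (Impl a b)) (Impl (Cir i a) (Cir i b)))"
| MixCir: "derivable (Impl (Cir i a) (Conj a (Apx i (Inf i (Cir i a)))))"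
| IndCir: "derivable (Impl (Cir i (Impl a (Apx i (Inf i a)))) (Impl a (Cir i a)))"
| ExpDef: "derivable (Iff (Exp i a) (Conj (Aw i a) (Cir i a)))"
| MP: "derivable (Impl a b) \<Longrightarrow> derivable a \<Longrightarrow> derivable b"
| NecInf: "derivable a \<Longrightarrow> derivable (Inf i a)"
| NecApx: "derivable a \<Longrightarrow> derivable (Apx i a)"
| NecCir: "derivable a \<Longrightarrow> derivable (Cir i a)"

end

theory Submission
  imports Defs
begin

(* The awareness axioms hold because
  A\<^sub>i only inspects the atoms of its argument and awareness is constant on
  \<sim>\<^sub>i-classes. Both \<sim>\<^sub>i and \<approx>\<^sub>i are equivalence relations, which validates
  the S5 axioms. Since \<sim>\<^sub>i \<circ> \<approx>\<^sub>i is reflexive, the transitive closure seen from a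
  world w contains w itself; this gives the mix axiom, and the induction axiom becomes
  ordinary induction along the closure. *)

lemma sat_Impl [simp]: "sat M w (Impl a b) \<longleftrightarrow> (sat M w a \<longrightarrow> sat M w b)"
  by (simp add: Impl_def)

lemma sat_Iff [simp]: "sat M w (Iff a b) \<longleftrightarrow> (sat M w a \<longleftrightarrow> sat M w b)"
  by (auto simp add: Iff_def)

lemma sat_taut: "taut a \<Longrightarrow> sat M w a"
  unfolding taut_def by (metis sat.simps(2,3))

lemma equiv_not_all_succ:
  assumes "equiv A r" "\<not> (\<forall>v. (w, v) \<in> r \<longrightarrow> P v)" "(w, u) \<in> r"
  shows "\<not> (\<forall>v. (u, v) \<in> r \<longrightarrow> P v)"
  using equiv_class_eq[OF assms(1,3)] assms(2) by blast

lemma trancl_invariant_from_refl: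
  assumes "(w, w) \<in> r" "P w"
    and step: "\<And>u y. (w, u) \<in> r\<^sup>+ \<Longrightarrow> P u \<Longrightarrow> (u, y) \<in> r \<Longrightarrow> P y"
    and "(w, v) \<in> r\<^sup>+"
  shows "P v"
  using \<open>(w, v) \<in> r\<^sup>+\<close>
proof (induction rule: trancl_induct)
  case (base y)
  with assms(1,2) show ?case by (blast intro: step)
next
  case (step y z)
  then show ?case by (blast intro: assms(3))
qed

lemma is_model_equiv_R: "is_model M \<Longrightarrow> equiv (W M) (R M i)"
  by (simp add: is_model_def)

lemma is_model_Aws_R: "is_model M \<Longrightarrow> (w, v) \<in> R M i \<Longrightarrow> Aws M i w = Aws M i v"
  by (simp add: is_model_def)

lemma equiv_approx: "equiv (W M) (approx M i)"
  unfolding equiv_def refl_on_def sym_def trans_def approx_def by auto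

lemma circ_refl:
  assumes "is_model M" "w \<in> W M"
  shows "(w, w) \<in> circ M i"
  using assms equiv_approx[of M i] is_model_equiv_R[of M i]
  unfolding circ_def equiv_def refl_on_def by blast

lemma circ_subset: "is_model M \<Longrightarrow> circ M i \<subseteq> W M \<times> W M"
  using equiv_approx[of M i] is_model_equiv_R[of M i]
  unfolding circ_def equiv_def refl_on_def by blast

lemma trancl_circ_closed:
  assumes "is_model M" "(w, v) \<in> (circ M i)\<^sup>+"
  shows "v \<in> W M"
  using trancl_subset_Sigma[OF circ_subset[OF assms(1)]] assms(2) by blast

lemma approx_R_trancl_circ:
  "(w, u) \<in> approx M i \<Longrightarrow> (u, v) \<in> R M i \<Longrightarrow> (v, x) \<in> (circ M i)\<^sup>+
    \<Longrightarrow> (w, x) \<in> (circ M i)\<^sup>+"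
  by (rule trancl_into_trancl2) (auto simp: circ_def)

lemma sat_mix_axiom:
  assumes "is_model M" "w \<in> W M"
  shows "sat M w (Impl (Cir i a) (Conj a (Apx i (Inf i (Cir i a)))))"
proof -
  have "(w, w) \<in> (circ M i)\<^sup>+"
    using circ_refl[OF assms] by blast
  then show ?thesis by (auto intro: approx_R_trancl_circ)
qed

lemma sat_induction_axiom:
  assumes "is_model M" "w \<in> W M"
  shows "sat M w (Impl (Cir i (Impl a (Apx i (Inf i a)))) (Impl a (Cir i a)))"
proof -
  have "sat M v a"
    if ind: "sat M w (Cir i (Impl a (Apx i (Inf i a))))" and "sat M w a"
      and "(w, v) \<in> (circ M i)\<^sup>+" for v
    using circ_refl[OF assms] \<open>sat M w a\<close> _ \<open>(w, v) \<in> (circ M i)\<^sup>+\<close>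
  proof (rule trancl_invariant_from_refl)
    fix u y
    assume "(w, u) \<in> (circ M i)\<^sup>+" "sat M u a" "(u, y) \<in> circ M i"
    moreover from \<open>(u, y) \<in> circ M i\<close> obtain x where "(u, x) \<in> approx M i" "(x, y) \<in> R M i"
      unfolding circ_def by blast
    ultimately show "sat M y a"
      using ind by simp
  qed
  then show ?thesis
    unfolding sat_Impl sat.simps(7) by blast
qed

theorem theorem3:
  fixes \<phi> :: "('p :: countable, 'g :: finite) fm"
    and M :: "('w, 'p, 'g) model"
  assumes "derivable \<phi>"
    and "is_model M"
    and "w \<in> W M"
  shows "sat M w \<phi>"
  using assms(1,3)
proof (induction arbitrary: w rule: derivable.induct)
  case (AwIntro i a) show ?case using is_model_Aws_R[OF assms(2)] by auto
next
  case (NAwIntro i a) show ?case using is_model_Aws_R[OF assms(2)] by auto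
next
  case (TInf i a)
  then show ?case using is_model_equiv_R[OF assms(2), of i] by (simp add: equiv_def refl_on_def)
next
  case (FiveInf i a)
  show ?case using equiv_not_all_succ[OF is_model_equiv_R[OF assms(2), of i]] by simp
next
  case (FiveApx i a)
  show ?case using equiv_not_all_succ[OF equiv_approx[of M i]] by simp
next
  case (MixCir i a) then show ?case by (rule sat_mix_axiom[OF assms(2)])
next
  case (IndCir i a) then show ?case by (rule sat_induction_axiom[OF assms(2)])
next
  case (NecInf a i)
  then show ?case using is_model_equiv_R[OF assms(2), of i] by (auto simp: equiv_def refl_on_def)
next
  case (NecCir a i) then show ?case using trancl_circ_closed[OF assms(2)] by auto
qed (auto simp: sat_taut approx_def)

end
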